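(* Let $d \geq 2$, $n \geq 1$, $\varphi(t) = \frac12 t^2$ and $w_{ij} = 1$ for all $i,j$. If $X \in \mathcal{M}$ is a critical point of $f(X) = \frac14\|X^\top X\|_F^2$ at which the Riemannian Hessian is negative semidefinite, then $x_i^\top x_j \neq 0$ for all $i, j$.
   Context: $\mathcal{M} = (\mathbb{S}^{d-1})^n$ is the set of $X \in \mathbb{R}^{d\times n}$ with unit-norm columns $x_1,\dots,x_n$, a Riemannian submanifold of $\mathbb{R}^{d\times n}$ with the Frobenius metric; gradient and Hessian are Riemannian. *)

theory Defs
  imports "HOL-Analysis.Analysis"
begin

text \<open>A point X of M = (S^{d-1})^n is represented as X :: real^'d^'n, the column
  x_i being X $ i :: real^'d.\<close>

definition on_M :: "real^'d^'n \<Rightarrow> bool" where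
  "on_M X \<longleftrightarrow> (\<forall>i. norm (X $ i) = 1)"

definition tangent_M :: "real^'d^'n \<Rightarrow> real^'d^'n \<Rightarrow> bool" where
  "tangent_M X V \<longleftrightarrow> (\<forall>i. X $ i \<bullet> V $ i = 0)"

definition geod_M :: "real^'d^'n \<Rightarrow> real^'d^'n \<Rightarrow> real \<Rightarrow> real^'d^'n" where
  "geod_M X V t = (\<chi> i. cos (t * norm (V $ i)) *\<^sub>R X $ i
                       + sin (t * norm (V $ i)) *\<^sub>R ((1 / norm (V $ i)) *\<^sub>R V $ i))"

text \<open>Riemannian gradient paired with a tangent vector V: <grad f(X), V> is the derivative
  of f along the geodesic; the Riemannian Hessian quadratic form Hess f(X)[V,V] is the
  second derivative of f along the geodesic.\<close>
definition riem_dir_deriv :: "(real^'d^'n \<Rightarrow> real) \<Rightarrow> real^'d^'n \<Rightarrow> real^'d^'n \<Rightarrow> real" where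
  "riem_dir_deriv f X V = deriv (\<lambda>t. f (geod_M X V t)) 0"

definition riem_hess_form :: "(real^'d^'n \<Rightarrow> real) \<Rightarrow> real^'d^'n \<Rightarrow> real^'d^'n \<Rightarrow> real" where
  "riem_hess_form f X V = deriv (deriv (\<lambda>t. f (geod_M X V t))) 0"

definition riem_critical :: "(real^'d^'n \<Rightarrow> real) \<Rightarrow> real^'d^'n \<Rightarrow> bool" where
  "riem_critical f X \<longleftrightarrow> on_M X \<and> (\<forall>V. tangent_M X V \<longrightarrow> riem_dir_deriv f X V = 0)"

definition riem_hess_nsd :: "(real^'d^'n \<Rightarrow> real) \<Rightarrow> real^'d^'n \<Rightarrow> bool" where
  "riem_hess_nsd f X \<longleftrightarrow> (\<forall>V. tangent_M X V \<longrightarrow> riem_hess_form f X V \<le> 0)"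

definition f_energy :: "real^'d^'n \<Rightarrow> real" where
  "f_energy X = (1/4) * (\<Sum>i\<in>UNIV. \<Sum>j\<in>UNIV. (X $ i \<bullet> X $ j)\<^sup>2)"

end

theory Submission
  imports Defs
begin

(* Rotating the column x_i
   towards x_j is a geodesic of M along which the energy is a quadratic form in cos t and
   sin t; its second derivative at 0 is S_j - S_i + 1, where S_k = sum_l (x_k . x_l)^2.
   Rotating x_j towards x_i gives S_i - S_j + 1, and the two Hessian values add up to 2 > 0. *)

lemma sum_UNIV_remove:
  fixes g :: "'a::finite \<Rightarrow> 'b::comm_monoid_add"
  shows "sum g UNIV = g i + sum g (- {i})"
  by (metis Compl_eq_Diff_UNIV finite sum.remove UNIV_I)

lemma f_energy_replace_column:
  fixes X :: "real^'d^'n"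
  shows "f_energy (\<chi> k. if k = i then y else X$k) =
     1/4 * (\<Sum>k\<in>-{i}. \<Sum>l\<in>-{i}. (X$k \<bullet> X$l)\<^sup>2) + 1/2 * (\<Sum>k\<in>-{i}. (y \<bullet> X$k)\<^sup>2)
     + 1/4 * (y \<bullet> y)\<^sup>2"
proof -
  let ?Y = "(\<chi> k. if k = i then y else X$k) :: real^'d^'n"
  have "(\<Sum>k\<in>UNIV. \<Sum>l\<in>UNIV. (?Y$k \<bullet> ?Y$l)\<^sup>2)
      = (\<Sum>k\<in>UNIV. (?Y$k \<bullet> y)\<^sup>2 + (\<Sum>l\<in>-{i}. (?Y$k \<bullet> X$l)\<^sup>2))"
    by (subst sum_UNIV_remove[of _ i]) simp
  also have "\<dots> = (y \<bullet> y)\<^sup>2 + (\<Sum>l\<in>-{i}. (y \<bullet> X$l)\<^sup>2) +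
      (\<Sum>k\<in>-{i}. (X$k \<bullet> y)\<^sup>2 + (\<Sum>l\<in>-{i}. (X$k \<bullet> X$l)\<^sup>2))"
    by (subst sum_UNIV_remove[of _ i]) simp
  also have "\<dots> = (y \<bullet> y)\<^sup>2 + 2 * (\<Sum>l\<in>-{i}. (y \<bullet> X$l)\<^sup>2) +
      (\<Sum>k\<in>-{i}. \<Sum>l\<in>-{i}. (X$k \<bullet> X$l)\<^sup>2)"
    by (simp add: sum.distrib inner_commute)
  finally show ?thesis unfolding f_energy_def by simp
qed

lemma deriv2_trig_quadratic_at_0:
  fixes K P Q R :: real
  shows "deriv (deriv (\<lambda>t. K + P * (cos t)\<^sup>2 + Q * (sin t * cos t) + R * (sin t)\<^sup>2)) 0
    = 2 * R - 2 * P"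
proof -
  let ?f' = "\<lambda>t. P * (2 * cos t * - sin t) + Q * (cos t * cos t - sin t * sin t)
    + R * (2 * sin t * cos t)"
  have "deriv (\<lambda>t. K + P * (cos t)\<^sup>2 + Q * (sin t * cos t) + R * (sin t)\<^sup>2) = ?f'"
  proof
    fix t :: real
    have "((\<lambda>t. K + P * (cos t)\<^sup>2 + Q * (sin t * cos t) + R * (sin t)\<^sup>2)
        has_real_derivative ?f' t) (at t)"
      by (auto intro!: derivative_eq_intros simp: power2_eq_square algebra_simps)
    then show "deriv (\<lambda>t. K + P * (cos t)\<^sup>2 + Q * (sin t * cos t) + R * (sin t)\<^sup>2) t = ?f' t"
      by (rule DERIV_imp_deriv)
  qed
  moreover have "(?f' has_real_derivative 2 * R - 2 * P) (at 0)"
    by (auto intro!: derivative_eq_intros)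
  ultimately show ?thesis
    by (simp add: DERIV_imp_deriv)
qed

lemma geod_M_rotate_column:
  fixes X :: "real^'d^'n"
  assumes "norm u = 1"
  shows "geod_M X (\<chi> k. if k = i then u else 0) t
    = (\<chi> k. if k = i then cos t *\<^sub>R X$i + sin t *\<^sub>R u else X$k)"
  using assms by (simp add: geod_M_def vec_eq_iff)

lemma riem_hess_form_f_energy_rotate_column:
  fixes X :: "real^'d^'n"
  assumes xi: "norm (X$i) = 1" and u: "norm u = 1" and orth: "X$i \<bullet> u = 0"
  shows "riem_hess_form f_energy X (\<chi> k. if k = i then u else 0) =
     (\<Sum>k\<in>UNIV. (u \<bullet> X$k)\<^sup>2) - (\<Sum>k\<in>UNIV. (X$i \<bullet> X$k)\<^sup>2) + 1"
proof -
  have ii: "X$i \<bullet> X$i = 1" and uu: "u \<bullet> u = 1"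
    using xi u by (metis power2_norm_eq_inner power_one)+
  have orth': "u \<bullet> X$i = 0"
    using orth by (simp add: inner_commute)
  define K where "K = 1/4 * (\<Sum>k\<in>-{i}. \<Sum>l\<in>-{i}. (X$k \<bullet> X$l)\<^sup>2) + 1/4"
  define P where "P = 1/2 * (\<Sum>k\<in>-{i}. (X$i \<bullet> X$k)\<^sup>2)"
  define Q where "Q = (\<Sum>k\<in>-{i}. (X$i \<bullet> X$k) * (u \<bullet> X$k))"
  define R where "R = 1/2 * (\<Sum>k\<in>-{i}. (u \<bullet> X$k)\<^sup>2)"
  have energy_along:
    "f_energy (geod_M X (\<chi> k. if k = i then u else 0) t)
      = K + P * (cos t)\<^sup>2 + Q * (sin t * cos t) + R * (sin t)\<^sup>2" for t
  proof -
    let ?y = "cos t *\<^sub>R X$i + sin t *\<^sub>R u"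
    have "?y \<bullet> ?y = 1"
      by (simp add: inner_add_left inner_add_right orth orth' ii uu
          sin_cos_squared_add3 flip: power2_eq_square)
    moreover have "(\<Sum>k\<in>-{i}. (?y \<bullet> X$k)\<^sup>2)
        = (\<Sum>k\<in>-{i}. (cos t)\<^sup>2 * (X$i \<bullet> X$k)\<^sup>2
            + 2 * (sin t * cos t) * ((X$i \<bullet> X$k) * (u \<bullet> X$k)) + (sin t)\<^sup>2 * (u \<bullet> X$k)\<^sup>2)"
      by (rule sum.cong) (auto simp: inner_add_left power2_eq_square algebra_simps)
    moreover have "\<dots> = (cos t)\<^sup>2 * (2 * P) + 2 * (sin t * cos t) * Q + (sin t)\<^sup>2 * (2 * R)"
      by (simp add: sum.distrib sum_distrib_left P_def Q_def R_def)
    ultimately show ?thesis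
      by (simp add: geod_M_rotate_column[OF u] f_energy_replace_column K_def algebra_simps)
  qed
  have "riem_hess_form f_energy X (\<chi> k. if k = i then u else 0) = 2 * R - 2 * P"
    unfolding riem_hess_form_def energy_along by (rule deriv2_trig_quadratic_at_0)
  also have "\<dots> = (\<Sum>k\<in>UNIV. (u \<bullet> X$k)\<^sup>2) - (\<Sum>k\<in>UNIV. (X$i \<bullet> X$k)\<^sup>2) + 1"
    by (simp add: P_def R_def sum_UNIV_remove[of _ i] orth' ii)
  finally show ?thesis .
qed

theorem mainTheorem17:
  fixes X :: "real^'d^'n"
  assumes "CARD('d) \<ge> 2"
    and "on_M X"
    and "riem_critical f_energy X"
    and "riem_hess_nsd f_energy X"
  shows "\<forall>i j. X $ i \<bullet> X $ j \<noteq> 0"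
proof (intro allI notI)
  fix i j
  assume ij: "X $ i \<bullet> X $ j = 0"
  let ?S = "\<lambda>i. \<Sum>k\<in>UNIV. (X$i \<bullet> X$k)\<^sup>2"
  have unit: "norm (X$k) = 1" for k
    using \<open>on_M X\<close> by (simp add: on_M_def)
  have ji: "X $ j \<bullet> X $ i = 0"
    using ij by (simp add: inner_commute)
  have "riem_hess_form f_energy X (\<chi> k. if k = i then X$j else 0) \<le> 0"
    using \<open>riem_hess_nsd f_energy X\<close> ij by (simp add: riem_hess_nsd_def tangent_M_def)
  then have "?S j - ?S i + 1 \<le> 0"
    by (simp add: riem_hess_form_f_energy_rotate_column[OF unit unit ij])
  moreover have "riem_hess_form f_energy X (\<chi> k. if k = j then X$i else 0) \<le> 0"
    using \<open>riem_hess_nsd f_energy X\<close> ji by (simp add: riem_hess_nsd_def tangent_M_def)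
  then have "?S i - ?S j + 1 \<le> 0"
    by (simp add: riem_hess_form_f_energy_rotate_column[OF unit unit ji])
  ultimately show False
    by linarith
qed

end
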